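(* Let $d\ge2$, let $K$ be a number field, let $\mathbf A,\mathbf B\in K[t]$ be nonzero coprime polynomials and $\mathbf c=\mathbf A/\mathbf B$. Let $v\in\Omega_{\mathbb Q}$ be a non-archimedean place such that (i) every coefficient of $\mathbf A$ and of $\mathbf B$ is a $v$-adic integer; (ii) the resultant of $\mathbf A$ and $\mathbf B$ and the leading coefficients of $\mathbf A$ and of $\mathbf B$ are $v$-adic units; (iii) if the constant coefficient $a_0$ of $\mathbf A$ is nonzero, then $a_0$ is a $v$-adic unit. Then for each $\lambda\in\overline{\mathbb Q}^*$, $$\frac{\log M_{\mathbf c,n,v}(\lambda)}{d^n}=\frac{\log M_{\mathbf c,1,v}(\lambda)}{d}\quad\text{for all }n\ge1.$$
   Context: For each $v\in\Omega_{\mathbb Q}$ a fixed extension of $|\cdot|_v$ to $\overline{\mathbb Q}$ is used; $x$ is a $v$-adic integer if $|x|_v\le1$ and a $v$-adic unit if $|x|_v=1$. The polynomials $\mathbf A_{\mathbf c,n},\mathbf B_{\mathbf c,n}$ are defined by: $\mathbf A_{\mathbf c,0}=\mathbf A$, $\mathbf B_{\mathbf c,0}=\mathbf B$; if $\mathbf A(0)\neq0$ then $\mathbf A_{\mathbf c,1}=\mathbf A^d+t\mathbf B^d$, $\mathbf B_{\mathbf c,1}=\mathbf A\mathbf B^{d-1}$, while if $\mathbf A(0)=0$ then $\mathbf A_{\mathbf c,1}=(\mathbf A^d+t\mathbf B^d)/t$, $\mathbf B_{\mathbf c,1}=\mathbf A\mathbf B^{d-1}/t$; for $n\ge1$, $\mathbf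 A_{\mathbf c,n+1}=\mathbf A_{\mathbf c,n}^d+t\mathbf B_{\mathbf c,n}^d$, $\mathbf B_{\mathbf c,n+1}=\mathbf A_{\mathbf c,n}\mathbf B_{\mathbf c,n}^{d-1}$. Finally $M_{\mathbf c,n,v}(\lambda)=\max\{|\mathbf A_{\mathbf c,n}(\lambda)|_v,|\mathbf B_{\mathbf c,n}(\lambda)|_v\}$. *)

theory Defs
  imports "Subresultants.Resultant_Prelim" "HOL-Computational_Algebra.Computational_Algebra"
begin

text \<open>Algebraic closure of Q modelled as the algebraic complex numbers.\<close>

definition number_field :: "complex set \<Rightarrow> bool" where
  "number_field K \<longleftrightarrow>
     0 \<in> K \<and> 1 \<in> K \<and>
     (\<forall>x\<in>K. \<forall>y\<in>K. x + y \<in> K \<and> x * y \<in> K \<and> - x \<in> K) \<and>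
     (\<forall>x\<in>K. x \<noteq> 0 \<longrightarrow> inverse x \<in> K) \<and>
     (\<exists>bs :: complex list. \<forall>x\<in>K. \<exists>qs :: rat list. length qs = length bs \<and>
         x = (\<Sum>i<length bs. of_rat (qs ! i) * bs ! i))"

definition padic_abs :: "nat \<Rightarrow> rat \<Rightarrow> real" where
  "padic_abs p q = (if q = 0 then 0 else
     (let (a, b) = quotient_of q in
       real p powr (- (real (multiplicity (int p) a) - real (multiplicity (int p) b)))))"

definition padic_abs_ext :: "nat \<Rightarrow> (complex \<Rightarrow> real) \<Rightarrow> bool" where
  "padic_abs_ext p f \<longleftrightarrow>
     (\<forall>x. algebraic x \<longrightarrow> f x \<ge> 0 \<and> (f x = 0 \<longleftrightarrow> x = 0)) \<and>
     (\<forall>x y. algebraic x \<longrightarrow> algebraic y \<longrightarrow> f (x * y) = f x * f y) \<and>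
     (\<forall>x y. algebraic x \<longrightarrow> algebraic y \<longrightarrow> f (x + y) \<le> f x + f y) \<and>
     (\<forall>q. f (of_rat q) = padic_abs p q)"

definition v_integer :: "(complex \<Rightarrow> real) \<Rightarrow> complex \<Rightarrow> bool" where
  "v_integer f x \<longleftrightarrow> f x \<le> 1"

definition v_unit :: "(complex \<Rightarrow> real) \<Rightarrow> complex \<Rightarrow> bool" where
  "v_unit f x \<longleftrightarrow> f x = 1"

fun AB_seq :: "nat \<Rightarrow> complex poly \<Rightarrow> complex poly \<Rightarrow> nat \<Rightarrow> complex poly \<times> complex poly" where
  "AB_seq d A B 0 = (A, B)"
| "AB_seq d A B (Suc 0) =
     (if poly A 0 \<noteq> 0 then (A ^ d + [:0, 1:] * B ^ d, A * B ^ (d - 1))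
      else ((A ^ d + [:0, 1:] * B ^ d) div [:0, 1:], (A * B ^ (d - 1)) div [:0, 1:]))"
| "AB_seq d A B (Suc (Suc n)) =
     (let (An, Bn) = AB_seq d A B (Suc n) in (An ^ d + [:0, 1:] * Bn ^ d, An * Bn ^ (d - 1)))"

definition M_cnv :: "nat \<Rightarrow> complex poly \<Rightarrow> complex poly \<Rightarrow> nat \<Rightarrow> (complex \<Rightarrow> real) \<Rightarrow> complex \<Rightarrow> real" where
  "M_cnv d A B n f z = max (f (poly (fst (AB_seq d A B n)) z)) (f (poly (snd (AB_seq d A B n)) z))"

end

theory Submission
  imports Defs
begin

text \<open>An absolute value on the algebraic numbers that is bounded on the integers is
  ultrametric. For n \<ge> 1 the values x_n, y_n of A_{c,n}, B_{c,n} at \<lambda> follow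
  (x, y) \<mapsto> (x^d + \<lambda> y^d, x y^(d-1)). If |\<lambda>| > 1, the unit leading coefficients give
  |A(\<lambda>)| = |\<lambda>|^deg A and |B(\<lambda>)| = |\<lambda>|^deg B; the two terms of x_1 then have exponents
  that differ modulo d, so |x_1|^d > |\<lambda>| |y_1|^d, and this dominance propagates with
  M_{n+1} = |x_n|^d = M_n^d. If |\<lambda>| \<le> 1, Cramer's rule for the Sylvester matrix writes the
  unit resultant as an integral combination of A(\<lambda>) and B(\<lambda>), so the pair is primitive,
  max(|A(\<lambda>)|, |B(\<lambda>)|) = 1; primitivity, in the form max(|x|^d, |\<lambda>| |y|^d) = 1,
  propagates and M_n = 1. Either way M_n = M_1^(d^(n-1)).\<close>

section \<open>Algebraic numbers\<close>

interpretation rat_vs: vector_space "\<lambda>(r::rat) (z::complex). of_rat r * z"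
  by unfold_locales (simp_all add: algebra_simps of_rat_add of_rat_mult)

lemma rat_vs_span_scale: "u \<in> rat_vs.span S \<Longrightarrow> c \<in> \<rat> \<Longrightarrow> c * u \<in> rat_vs.span S"
  by (metis Rats_cases rat_vs.span_scale)

lemma rat_vs_span_mult:
  assumes u: "u \<in> rat_vs.span U" and w: "w \<in> rat_vs.span W"
  shows "u * w \<in> rat_vs.span {a * b | a b. a \<in> U \<and> b \<in> W}"
proof -
  let ?P = "{a * b | a b. a \<in> U \<and> b \<in> W}"
  have left: "a * w \<in> rat_vs.span ?P" if a: "a \<in> U" for a
    using w
  proof (induct rule: rat_vs.span_induct_alt)
    case (step c x y)
    have "a * (of_rat c * x + y) = of_rat c * (a * x) + a * y" by (simp add: algebra_simps)
    moreover have "a * x \<in> rat_vs.span ?P" using a step(1) by (intro rat_vs.span_base) blast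
    ultimately show ?case using step(2) rat_vs.span_add rat_vs.span_scale by simp
  qed (simp add: rat_vs.span_zero)
  from u show ?thesis
  proof (induct rule: rat_vs.span_induct_alt)
    case (step c x y)
    have "(of_rat c * x + y) * w = of_rat c * (x * w) + y * w" by (simp add: algebra_simps)
    then show ?case using step left rat_vs.span_add rat_vs.span_scale by simp
  qed (simp add: rat_vs.span_zero)
qed

lemma algebraic_if_powers_in_finite_span:
  assumes T: "finite T" and pow: "\<And>k. (z::complex) ^ k \<in> rat_vs.span T"
  shows "algebraic z"
proof (cases "inj_on (\<lambda>k. z ^ k) {..card T}")
  case True
  define S where "S = (\<lambda>k. z ^ k) ` {..card T}"
  have "card S = Suc (card T)" unfolding S_def using card_image[OF True] by simp
  then have "rat_vs.dependent S"
    using rat_vs.independent_span_bound[OF T, of S] pow unfolding S_def by auto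
  then obtain u where u: "\<exists>v\<in>S. u v \<noteq> 0" "(\<Sum>v\<in>S. of_rat (u v) * v) = 0"
    using rat_vs.dependent_finite[of S] unfolding S_def by auto
  define p where "p = (\<Sum>k\<le>card T. monom (of_rat (u (z ^ k)) :: complex) k)"
  have coeff_p: "coeff p i = (if i \<le> card T then of_rat (u (z ^ i)) else 0)" for i
    unfolding p_def by (simp add: coeff_sum)
  have "poly p z = (\<Sum>v\<in>S. of_rat (u v) * v)"
    unfolding p_def S_def by (simp add: poly_sum poly_monom sum.reindex[OF True])
  with u(2) have "poly p z = 0" by simp
  moreover from u(1) obtain k where "k \<le> card T" "u (z ^ k) \<noteq> 0" unfolding S_def by auto
  then have "p \<noteq> 0" using coeff_p[of k] by (metis coeff_0 of_rat_eq_0_iff)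
  moreover have "coeff p i \<in> \<rat>" for i using coeff_p[of i] by auto
  ultimately show ?thesis by (intro algebraicI') auto
next
  case False
  then obtain i j where ij: "i \<noteq> j" "z ^ i = z ^ j" unfolding inj_on_def by auto
  define p where "p = (monom 1 i - monom 1 j :: complex poly)"
  have "coeff p i = 1" using ij(1) unfolding p_def by (simp add: coeff_monom)
  then have "p \<noteq> 0" by auto
  moreover have "coeff p k \<in> \<int>" for k unfolding p_def by (simp add: coeff_monom)
  moreover have "poly p z = 0" unfolding p_def using ij(2) by (simp add: poly_monom)
  ultimately show ?thesis by (intro algebraicI) auto
qed

lemma powers_in_finite_span_if_algebraic:
  assumes "algebraic (x::complex)"
  obtains T where "finite T" "\<And>k. x ^ k \<in> rat_vs.span T"
proof -
  obtain p :: "complex poly" where p: "\<And>i. coeff p i \<in> \<rat>" "p \<noteq> 0" "poly p x = 0"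
    using assms unfolding algebraic_altdef by blast
  define m where "m = degree p"
  define T where "T = (\<lambda>i. x ^ i) ` {..<m}"
  have "x ^ k \<in> rat_vs.span T" for k
  proof (induct k rule: less_induct)
    case (less k)
    show ?case
    proof (cases "k < m")
      case True
      then show ?thesis unfolding T_def by (intro rat_vs.span_base) auto
    next
      case False
      have "0 = x ^ (k - m) * poly p x" using p(3) by simp
      also have "\<dots> = (\<Sum>i\<le>m. coeff p i * x ^ (i + (k - m)))"
        unfolding m_def poly_altdef by (simp add: sum_distrib_left power_add mult_ac)
      also have "\<dots> = (\<Sum>i<m. coeff p i * x ^ (i + (k - m))) + lead_coeff p * x ^ k"
        using False by (simp add: lessThan_Suc_atMost[symmetric] m_def)
      finally have "lead_coeff p * x ^ k = - (\<Sum>i<m. coeff p i * x ^ (i + (k - m)))"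
        by (simp add: eq_neg_iff_add_eq_0 algebra_simps)
      then have "x ^ k = - (\<Sum>i<m. coeff p i * x ^ (i + (k - m))) / lead_coeff p"
        using p(2) by (metis leading_coeff_0_iff nonzero_mult_div_cancel_left)
      also have "\<dots> = (\<Sum>i<m. (- coeff p i / lead_coeff p) * x ^ (i + (k - m)))"
        by (simp add: sum_divide_distrib flip: sum_negf)
      also have "\<dots> \<in> rat_vs.span T"
        using False p(1) less by (intro rat_vs.span_sum rat_vs_span_scale) auto
      finally show ?thesis .
    qed
  qed
  moreover have "finite T" unfolding T_def by simp
  ultimately show thesis using that by blast
qed

lemma products_of_powers_in_finite_span:
  assumes "algebraic (x::complex)" "algebraic y"
  obtains T where "finite T" "\<And>i j. x ^ i * y ^ j \<in> rat_vs.span T"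
proof -
  obtain X Y where X: "finite X" "\<And>k. x ^ k \<in> rat_vs.span X"
    and Y: "finite Y" "\<And>k. y ^ k \<in> rat_vs.span Y"
    using powers_in_finite_span_if_algebraic assms by metis
  let ?T = "{a * b | a b. a \<in> X \<and> b \<in> Y}"
  have "?T = (\<lambda>(a, b). a * b) ` (X \<times> Y)" by auto
  with X Y have "finite ?T" by simp
  moreover have "x ^ i * y ^ j \<in> rat_vs.span ?T" for i j by (rule rat_vs_span_mult[OF X(2) Y(2)])
  ultimately show thesis using that by blast
qed

lemma algebraic_add [simp, intro]:
  assumes "algebraic (x::complex)" "algebraic y"
  shows "algebraic (x + y)"
proof -
  obtain T where T: "finite T" "\<And>i j. x ^ i * y ^ j \<in> rat_vs.span T"
    using products_of_powers_in_finite_span assms by blast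
  have "(x + y) ^ k \<in> rat_vs.span T" for k
    unfolding binomial_ring by (intro rat_vs.span_sum) (simp add: mult.assoc rat_vs_span_scale T(2))
  with T(1) show ?thesis by (rule algebraic_if_powers_in_finite_span)
qed

lemma algebraic_mult [simp, intro]:
  assumes "algebraic (x::complex)" "algebraic y"
  shows "algebraic (x * y)"
proof -
  obtain T where T: "finite T" "\<And>i j. x ^ i * y ^ j \<in> rat_vs.span T"
    using products_of_powers_in_finite_span assms by blast
  have "(x * y) ^ k \<in> rat_vs.span T" for k unfolding power_mult_distrib by (rule T(2))
  with T(1) show ?thesis by (rule algebraic_if_powers_in_finite_span)
qed

lemma algebraic_power [simp, intro]: "algebraic (x::complex) \<Longrightarrow> algebraic (x ^ n)"
  by (induct n) auto

lemma algebraic_sum [intro]: "(\<And>i. i \<in> S \<Longrightarrow> algebraic (g i :: complex)) \<Longrightarrow> algebraic (sum g S)"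
  by (induct S rule: infinite_finite_induct) auto

lemma algebraic_poly [intro]:
  "(\<And>i. algebraic (coeff P i)) \<Longrightarrow> algebraic (z::complex) \<Longrightarrow> algebraic (poly P z)"
  unfolding poly_altdef by auto

lemma number_field_algebraic:
  assumes K: "number_field K" and x: "x \<in> K"
  shows "algebraic x"
proof -
  obtain bs :: "complex list" where bs: "\<forall>x\<in>K. \<exists>qs :: rat list. length qs = length bs \<and>
      x = (\<Sum>i<length bs. of_rat (qs ! i) * bs ! i)"
    using K unfolding number_field_def by blast
  have "1 \<in> K" and mult: "\<And>a b. a \<in> K \<Longrightarrow> b \<in> K \<Longrightarrow> a * b \<in> K"
    using K unfolding number_field_def by blast+
  then have "x ^ k \<in> K" for k
    using x by (induct k) auto
  have "x ^ k \<in> rat_vs.span (set bs)" for k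
  proof -
    obtain qs :: "rat list" where qs: "x ^ k = (\<Sum>i<length bs. of_rat (qs ! i) * bs ! i)"
      using bs \<open>x ^ k \<in> K\<close> by blast
    show ?thesis unfolding qs by (intro rat_vs.span_sum rat_vs_span_scale rat_vs.span_base) auto
  qed
  then show ?thesis by (rule algebraic_if_powers_in_finite_span[rotated]) simp
qed

section \<open>Non-archimedean absolute values\<close>

lemma le_if_power_le_linear_mult_power:
  fixes a b :: real
  assumes b: "0 \<le> b" and pow: "\<And>n. a ^ n \<le> (real n + 1) * b ^ n"
  shows "a \<le> b"
proof (rule ccontr)
  assume "\<not> a \<le> b"
  then have ba: "b < a" by simp
  show False
  proof (cases "b = 0")
    case True
    then show False using pow[of 1] ba by simp
  next
    case False
    with b have b: "0 < b" by simp
    define r where "r = a / b"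
    have rn: "r ^ n \<le> real n + 1" for n
      using pow[of n] b by (simp add: r_def power_divide divide_le_eq)
    define e where "e = r - 1"
    have e: "0 < e" using ba b by (simp add: e_def r_def)
    obtain n :: nat where n: "3 / e\<^sup>2 < real n" using reals_Archimedean2 by blast
    moreover have "0 < 3 / e\<^sup>2" using e by simp
    ultimately have "0 < real n" by linarith
    then have "1 \<le> n" by simp
    then have n1: "1 \<le> real n" by simp
    \<comment> \<open>by Bernoulli, r^(2n) grows quadratically in n, contradicting r^(2n) \<le> 2n + 1\<close>
    have "(real n * e)\<^sup>2 \<le> (1 + real n * e)\<^sup>2" using e by (intro power_mono) auto
    also have "\<dots> \<le> (r ^ n)\<^sup>2"
      using Bernoulli_inequality[of e n] e by (intro power_mono) (auto simp: e_def)
    also have "\<dots> = r ^ (2 * n)" by (simp add: power_mult[symmetric] mult.commute)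
    also have "\<dots> \<le> 3 * real n" using rn[of "2 * n"] n1 by simp
    finally have "real n * e\<^sup>2 \<le> 3" using n1 by (simp add: power2_eq_square mult_ac)
    with n e show False by (simp add: divide_less_eq mult.commute)
  qed
qed

lemma padic_abs_of_nat_le_1: "padic_abs p (of_nat n) \<le> 1"
proof (cases "n = 0 \<or> p = 0")
  case False
  have "quotient_of (of_nat n :: rat) = (int n, 1)" using quotient_of_int[of "int n"] by simp
  then have "padic_abs p (of_nat n) = real p powr (- real (multiplicity (int p) (int n)))"
    using False by (simp add: padic_abs_def)
  also have "\<dots> \<le> real p powr 0" using False by (intro powr_mono) auto
  finally show ?thesis using False by simp
qed (auto simp: padic_abs_def split: prod.split)

locale nonarch_abs =
  fixes f :: "complex \<Rightarrow> real"
  assumes abs_nonneg: "algebraic x \<Longrightarrow> 0 \<le> f x"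
    and abs_eq_0_iff: "algebraic x \<Longrightarrow> f x = 0 \<longleftrightarrow> x = 0"
    and abs_mult: "algebraic x \<Longrightarrow> algebraic y \<Longrightarrow> f (x * y) = f x * f y"
    and abs_triangle: "algebraic x \<Longrightarrow> algebraic y \<Longrightarrow> f (x + y) \<le> f x + f y"
    and abs_of_nat_le_1: "f (of_nat n) \<le> 1"

lemma nonarch_abs_if_padic_abs_ext:
  assumes "padic_abs_ext p f"
  shows "nonarch_abs f"
proof
  fix n :: nat
  have "f (of_nat n) = f (of_rat (of_nat n))" by simp
  also have "\<dots> = padic_abs p (of_nat n)" using assms unfolding padic_abs_ext_def by blast
  finally show "f (of_nat n) \<le> 1" using padic_abs_of_nat_le_1 by simp
qed (use assms in \<open>auto simp: padic_abs_ext_def\<close>)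

context nonarch_abs
begin

lemma abs_0 [simp]: "f 0 = 0"
  using abs_eq_0_iff[of 0] by simp

lemma abs_1 [simp]: "f 1 = 1"
  using abs_mult[of 1 1] abs_eq_0_iff[of 1] by simp

lemma abs_minus: "algebraic x \<Longrightarrow> f (- x) = f x"
proof -
  have "f (-1) * f (-1) = 1" using abs_mult[of "-1" "-1"] by simp
  then have "f (-1) = 1" using abs_nonneg[of "-1"]
    by (auto simp: power2_eq_1_iff[of "f (-1)", unfolded power2_eq_square])
  then show "algebraic x \<Longrightarrow> f (- x) = f x" using abs_mult[of "-1" x] by simp
qed

lemma abs_power: "algebraic x \<Longrightarrow> f (x ^ n) = f x ^ n"
  by (induct n) (auto simp: abs_mult)

lemma abs_inverse:
  assumes x: "algebraic x"
  shows "f (inverse x) = inverse (f x)"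
proof (cases "x = 0")
  case False
  have "f x * f (inverse x) = f (x * inverse x)" using x by (simp add: abs_mult algebraic_inverse)
  also have "\<dots> = 1" using False by simp
  finally show ?thesis by (rule inverse_unique[symmetric])
qed simp

lemma abs_sum_le: "(\<And>i. i \<in> S \<Longrightarrow> algebraic (g i)) \<Longrightarrow> f (sum g S) \<le> (\<Sum>i\<in>S. f (g i))"
proof (induct S rule: infinite_finite_induct)
  case (insert a S)
  then have "f (g a + sum g S) \<le> f (g a) + f (sum g S)" by (intro abs_triangle) auto
  with insert show ?case by simp
qed auto

text \<open>Boundedness on the integers forces the ultrametric inequality: expanding (x + y)^n
  binomially, each of the n + 1 terms has absolute value at most max |x| |y| ^ n.\<close>

lemma abs_add_le_max:
  assumes x: "algebraic x" and y: "algebraic y"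
  shows "f (x + y) \<le> max (f x) (f y)"
proof (rule le_if_power_le_linear_mult_power)
  let ?M = "max (f x) (f y)"
  show "0 \<le> ?M" using abs_nonneg[OF x] by simp
  fix n
  have term_le: "f (of_nat (n choose k) * x ^ k * y ^ (n - k)) \<le> ?M ^ n" if "k \<le> n" for k
  proof -
    have "f (of_nat (n choose k) * x ^ k * y ^ (n - k)) = f (of_nat (n choose k)) * (f x ^ k * f y ^ (n - k))"
      using x y by (simp add: abs_mult abs_power mult.assoc)
    also have "\<dots> \<le> 1 * (?M ^ k * ?M ^ (n - k))"
      using abs_nonneg[OF x] abs_nonneg[OF y] abs_of_nat_le_1
      by (intro mult_mono power_mono) simp_all
    also have "\<dots> = ?M ^ n" using that by (simp flip: power_add)
    finally show ?thesis .
  qed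
  have "f (x + y) ^ n = f ((x + y) ^ n)" using x y by (simp add: abs_power)
  also have "\<dots> = f (\<Sum>k\<le>n. of_nat (n choose k) * x ^ k * y ^ (n - k))"
    by (simp only: binomial_ring)
  also have "\<dots> \<le> (\<Sum>k\<le>n. f (of_nat (n choose k) * x ^ k * y ^ (n - k)))"
    using x y by (intro abs_sum_le) auto
  also have "\<dots> \<le> (\<Sum>k\<le>n. ?M ^ n)" using term_le by (intro sum_mono) simp
  also have "\<dots> = (real n + 1) * ?M ^ n" by simp
  finally show "f (x + y) ^ n \<le> (real n + 1) * ?M ^ n" .
qed

lemma abs_add_eq_left:
  assumes x: "algebraic x" and y: "algebraic y" and less: "f y < f x"
  shows "f (x + y) = f x"
proof -
  have "f x = f ((x + y) + - y)" by simp
  also have "\<dots> \<le> max (f (x + y)) (f y)"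
    using abs_add_le_max[of "x + y" "- y"] x y by (simp add: abs_minus)
  finally show ?thesis using abs_add_le_max[OF x y] less by auto
qed

lemma abs_add_eq_max:
  assumes "algebraic x" "algebraic y" "f x \<noteq> f y"
  shows "f (x + y) = max (f x) (f y)"
  using abs_add_eq_left[of x y] abs_add_eq_left[of y x] assms
  by (cases "f x < f y") (auto simp: add.commute)

lemma abs_sum_le_bound:
  assumes "\<And>i. i \<in> S \<Longrightarrow> algebraic (g i)" "\<And>i. i \<in> S \<Longrightarrow> f (g i) \<le> c" "0 \<le> c"
  shows "f (sum g S) \<le> c"
  using assms
proof (induct S rule: infinite_finite_induct)
  case (insert a S)
  then have "f (g a + sum g S) \<le> max (f (g a)) (f (sum g S))" by (intro abs_add_le_max) auto
  also have "\<dots> \<le> c" using insert by simp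
  finally show ?case using insert by simp
qed auto

definition integral :: "complex \<Rightarrow> bool" where
  "integral x \<longleftrightarrow> algebraic x \<and> f x \<le> 1"

lemma integral_algebraic [intro]: "integral x \<Longrightarrow> algebraic x"
  and integral_abs_le_1: "integral x \<Longrightarrow> f x \<le> 1"
  by (simp_all add: integral_def)

lemma integral_0 [simp]: "integral 0"
  and integral_1 [simp]: "integral 1"
  by (simp_all add: integral_def)

lemma integral_minus [intro]: "integral x \<Longrightarrow> integral (- x)"
  by (simp add: integral_def abs_minus)

lemma integral_add [intro]: "integral x \<Longrightarrow> integral y \<Longrightarrow> integral (x + y)"
  using abs_add_le_max[of x y] by (auto simp: integral_def)

lemma integral_mult [intro]: "integral x \<Longrightarrow> integral y \<Longrightarrow> integral (x * y)"
  by (auto simp: integral_def abs_mult intro: mult_le_one abs_nonneg)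

lemma integral_power [intro]: "integral x \<Longrightarrow> integral (x ^ n)"
  by (induct n) auto

lemma integral_sum [intro]: "(\<And>i. i \<in> S \<Longrightarrow> integral (g i)) \<Longrightarrow> integral (sum g S)"
  by (induct S rule: infinite_finite_induct) auto

lemma integral_prod [intro]: "(\<And>i. i \<in> S \<Longrightarrow> integral (g i)) \<Longrightarrow> integral (prod g S)"
  by (induct S rule: infinite_finite_induct) auto

definition integral_poly :: "complex poly \<Rightarrow> bool" where
  "integral_poly P \<longleftrightarrow> (\<forall>i. integral (coeff P i))"

lemma integral_poly_pCons [simp]: "integral_poly (pCons a P) \<longleftrightarrow> integral a \<and> integral_poly P"
  unfolding integral_poly_def by (metis coeff_pCons_0 coeff_pCons_Suc not0_implies_Suc)

lemma abs_mult_integral_le: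
  assumes x: "algebraic x" and y: "integral y"
  shows "f (x * y) \<le> f x"
proof -
  have "f (x * y) = f x * f y" using x y by (simp add: abs_mult integral_algebraic)
  also have "\<dots> \<le> f x * 1" using x y abs_nonneg integral_abs_le_1 by (intro mult_left_mono) auto
  finally show ?thesis by simp
qed

lemma integral_poly_value [intro]: "integral_poly P \<Longrightarrow> integral z \<Longrightarrow> integral (poly P z)"
  unfolding poly_altdef integral_poly_def by auto

lemma algebraic_poly_value [intro]: "integral_poly P \<Longrightarrow> algebraic z \<Longrightarrow> algebraic (poly P z)"
  unfolding integral_poly_def by auto

lemma abs_poly_eq_power_degree:
  assumes "integral_poly P" and z: "algebraic z" "1 < f z" and "f (lead_coeff P) = 1"
  shows "f (poly P z) = f z ^ degree P"
  using assms(1,4)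
proof (induct P rule: pCons_induct)
  case (pCons a Q)
  show ?case
  proof (cases "Q = 0")
    case False
    with pCons have Q: "integral_poly Q" "f (poly Q z) = f z ^ degree Q" and a: "integral a" by auto
    have "f (z * poly Q z) = f z ^ Suc (degree Q)"
      using Q z by (simp add: abs_mult algebraic_poly_value)
    moreover have "f a < f z ^ Suc (degree Q)"
      using z integral_abs_le_1[OF a] one_less_power[of "f z" "Suc (degree Q)"] by simp
    ultimately have "f (z * poly Q z + a) = f z ^ Suc (degree Q)"
      using Q z a by (simp add: abs_add_eq_left algebraic_poly_value integral_algebraic)
    then show ?thesis using False by (simp add: add.commute)
  qed (use pCons in simp)
qed simp

lemma abs_poly_eq_1:
  assumes "integral_poly P" and z: "integral z" "f z < 1" and "f (coeff P 0) = 1"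
  shows "f (poly P z) = 1"
proof -
  obtain a Q where P: "P = pCons a Q" by (rule pCons_cases)
  with assms have a: "integral a" "f a = 1" and Q: "integral_poly Q" by auto
  have "f (z * poly Q z) \<le> f z" using z Q by (intro abs_mult_integral_le) auto
  then have "f (z * poly Q z) < f a" using z a by simp
  then have "f (a + z * poly Q z) = f a" using a z Q by (intro abs_add_eq_left) auto
  then show ?thesis using P a by simp
qed

lemma abs_poly_le_abs_if_coeff_0_eq_0:
  assumes "integral_poly P" and z: "integral z" and "coeff P 0 = 0"
  shows "f (poly P z) \<le> f z"
proof -
  obtain Q where P: "P = pCons 0 Q" using assms(3) by (metis coeff_pCons_0 pCons_cases)
  with assms have "integral_poly Q" by simp
  then show ?thesis using z P by (auto intro: abs_mult_integral_le)
qed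

end

section \<open>Resultants\<close>

lemma sylvester_mat_row_times_powers:
  fixes A B :: "'a :: comm_ring_1 poly"
  defines "N \<equiv> degree A + degree B"
  assumes k: "k < N"
  shows "(\<Sum>j<N. sylvester_mat A B $$ (k, j) * z ^ (N - 1 - j)) =
    (if k < degree B then poly A z * z ^ (degree B - 1 - k) else poly B z * z ^ (N - 1 - k))"
proof -
  define m where "m = degree A"
  define n where "n = degree B"
  \<comment> \<open>row k holds the coefficients, highest first, of the polynomial r below\<close>
  define r where "r = (if k < n then monom 1 (n - 1 - k) * A else monom 1 (N - 1 - k) * B)"
  have entry: "sylvester_mat A B $$ (k, j) = coeff r (N - Suc j)" if j: "j < N" for j
  proof -
    have "sylvester_mat A B $$ (k, j) =
      (if k < n then coeff (monom 1 (n - k) * A) (m + n - j) else coeff (monom 1 (m + n - k) * B) (m + n - j))"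
      using sylvester_index_mat2[of k A B j] k j unfolding m_def n_def N_def by simp
    also have "\<dots> = coeff r (N - Suc j)"
    proof (cases "k < n")
      case True
      have "(n - k \<le> m + n - j) = (n - 1 - k \<le> N - Suc j)" "m + n - j - (n - k) = N - Suc j - (n - 1 - k)"
        using True j unfolding N_def m_def n_def by arith+
      then show ?thesis using True unfolding r_def by (simp only: if_True coeff_monom_mult)
    next
      case False
      have "(m + n - k \<le> m + n - j) = (N - 1 - k \<le> N - Suc j)" "m + n - j - (m + n - k) = N - Suc j - (N - 1 - k)"
        using False j k unfolding N_def m_def n_def by arith+
      then show ?thesis using False unfolding r_def by (simp only: if_False coeff_monom_mult)
    qed
    finally show ?thesis .
  qed
  have "degree (monom 1 e * P) \<le> e + degree P" for e and P :: "'a poly"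
    using degree_mult_le[of "monom 1 e" P] degree_monom_le[of "1::'a" e] by linarith
  then have deg_r: "degree r < N" using k unfolding r_def N_def m_def n_def
    by (cases "k < n"; fastforce intro: le_less_trans)
  have "(\<Sum>j<N. sylvester_mat A B $$ (k, j) * z ^ (N - 1 - j)) =
        (\<Sum>j<N. (\<lambda>i. coeff r i * z ^ i) (N - Suc j))"
    using entry by (intro sum.cong) auto
  also have "\<dots> = (\<Sum>i<N. coeff r i * z ^ i)" by (rule sum.nat_diff_reindex)
  also have "\<dots> = poly r z"
    unfolding poly_altdef using deg_r
    by (intro sum.mono_neutral_right) (auto simp: coeff_eq_0)
  finally show ?thesis unfolding r_def n_def by (simp add: poly_monom mult.commute)
qed

text \<open>Cramer's rule for the Sylvester matrix S applied to the vector of powers of z: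
  the last row of adj S S = det S I expresses the resultant as a combination of the
  values z^e A(z) and z^e B(z), with the entries of adj S as coefficients.\<close>

lemma resultant_eq_adj_mat_combination:
  fixes A B :: "'a :: comm_ring_1 poly"
  defines "N \<equiv> degree A + degree B" and "S \<equiv> sylvester_mat A B"
  assumes N: "0 < N"
  shows "resultant A B = (\<Sum>k<N. adj_mat S $$ (N - 1, k) *
    (if k < degree B then poly A z * z ^ (degree B - 1 - k) else poly B z * z ^ (N - 1 - k)))"
proof -
  have S: "S \<in> carrier_mat N N" unfolding S_def N_def by (rule sylvester_carrier_mat)
  have adj: "(\<Sum>k<N. adj_mat S $$ (N - 1, k) * S $$ (k, j)) = (if j = N - 1 then det S else 0)"
    if j: "j < N" for j
  proof -
    have "(\<Sum>k<N. adj_mat S $$ (N - 1, k) * S $$ (k, j)) = (adj_mat S * S) $$ (N - 1, j)"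
      using adj_mat(1)[OF S] S j N by (simp add: scalar_prod_def lessThan_atLeast0)
    also have "\<dots> = (if j = N - 1 then det S else 0)"
      unfolding adj_mat(3)[OF S] using j N by auto
    finally show ?thesis .
  qed
  have "(\<Sum>k<N. adj_mat S $$ (N - 1, k) * (\<Sum>j<N. S $$ (k, j) * z ^ (N - 1 - j))) =
        (\<Sum>k<N. \<Sum>j<N. adj_mat S $$ (N - 1, k) * S $$ (k, j) * z ^ (N - 1 - j))"
    by (simp add: sum_distrib_left mult.assoc)
  also have "\<dots> = (\<Sum>j<N. \<Sum>k<N. adj_mat S $$ (N - 1, k) * S $$ (k, j) * z ^ (N - 1 - j))"
    by (rule sum.swap)
  also have "\<dots> = (\<Sum>j<N. (\<Sum>k<N. adj_mat S $$ (N - 1, k) * S $$ (k, j)) * z ^ (N - 1 - j))"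
    by (simp add: sum_distrib_right)
  also have "\<dots> = (\<Sum>j<N. if j = N - 1 then det S else 0)"
    using adj by (intro sum.cong) auto
  also have "\<dots> = resultant A B" using N by (simp add: S_def resultant_def)
  finally show ?thesis
    using sylvester_mat_row_times_powers[of _ A B z] unfolding S_def N_def by simp
qed

context nonarch_abs
begin

lemma integral_det:
  assumes M: "M \<in> carrier_mat n n" and entries: "\<And>i j. i < n \<Longrightarrow> j < n \<Longrightarrow> integral (M $$ (i, j))"
  shows "integral (det M)"
proof -
  have "integral (signof q)" for q :: "nat \<Rightarrow> nat"
    by (simp add: sign_def integral_minus)
  moreover have "integral (M $$ (i, q i))" if "q permutes {0..<n}" "i \<in> {0..<n}" for q i
    using that entries permutes_in_image by force
  ultimately show ?thesis
    unfolding det_def'[OF M] by (intro integral_sum integral_mult integral_prod) auto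
qed

lemma integral_adj_mat:
  assumes M: "M \<in> carrier_mat n n"
    and entries: "\<And>i j. i < n \<Longrightarrow> j < n \<Longrightarrow> integral (M $$ (i, j))"
    and ij: "i < n" "j < n"
  shows "integral (adj_mat M $$ (i, j))"
proof -
  have "integral (det (mat_delete M j i))"
    using M entries by (intro integral_det[OF mat_delete_carrier[OF M]]) (auto simp: mat_delete_def)
  moreover have "integral ((-1) ^ (j + i))" by (intro integral_power integral_minus integral_1)
  ultimately show ?thesis using M ij by (auto simp: adj_mat_def cofactor_def)
qed

lemma abs_resultant_le_max_abs_poly:
  assumes A: "integral_poly A" and B: "integral_poly B" and z: "integral z"
    and N: "0 < degree A + degree B"
  shows "f (resultant A B) \<le> max (f (poly A z)) (f (poly B z))"
proof -
  let ?M = "max (f (poly A z)) (f (poly B z))"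
  define N where "N = degree A + degree B"
  define S where "S = sylvester_mat A B"
  define w where "w k = (if k < degree B then poly A z * z ^ (degree B - 1 - k)
    else poly B z * z ^ (N - 1 - k))" for k
  have S: "S \<in> carrier_mat N N" unfolding S_def N_def by (rule sylvester_carrier_mat)
  have entries: "integral (S $$ (i, j))" if "i < N" "j < N" for i j
    using A B that sylvester_index_mat[of i A B j]
    unfolding S_def N_def integral_poly_def by auto
  have adj: "integral (adj_mat S $$ (N - 1, k))" if "k < N" for k
    using N that by (intro integral_adj_mat[OF S entries]) (auto simp: N_def)
  have w: "algebraic (w k)" "f (w k) \<le> ?M" for k
  proof -
    have "f (poly P z * z ^ e) \<le> f (poly P z)" if "integral_poly P" for P e
      using that z by (intro abs_mult_integral_le) auto
    then show "algebraic (w k)" "f (w k) \<le> ?M"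
      using A B z unfolding w_def by (auto simp: le_max_iff_disj)
  qed
  have "resultant A B = (\<Sum>k<N. adj_mat S $$ (N - 1, k) * w k)"
    using resultant_eq_adj_mat_combination[of A B z] N unfolding w_def N_def S_def by simp
  also have "f \<dots> \<le> ?M"
  proof (rule abs_sum_le_bound)
    fix k assume "k \<in> {..<N}"
    then have adj_k: "integral (adj_mat S $$ (N - 1, k))" by (intro adj) simp
    then show "algebraic (adj_mat S $$ (N - 1, k) * w k)" using w(1) by auto
    have "f (adj_mat S $$ (N - 1, k) * w k) = f (w k * adj_mat S $$ (N - 1, k))"
      by (simp only: mult.commute)
    also have "\<dots> \<le> f (w k)" by (rule abs_mult_integral_le[OF w(1) adj_k])
    finally show "f (adj_mat S $$ (N - 1, k) * w k) \<le> ?M" using w(2)[of k] by (rule order.trans)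
  qed (use abs_nonneg[of "poly A z"] A z in \<open>auto simp: le_max_iff_disj\<close>)
  finally show ?thesis .
qed

lemma max_abs_poly_eq_1_if_resultant_unit:
  assumes A: "integral_poly A" and B: "integral_poly B"
    and res: "f (resultant A B) = 1" and lead: "f (lead_coeff A) = 1" and z: "integral z"
  shows "max (f (poly A z)) (f (poly B z)) = 1"
proof (rule antisym)
  show "max (f (poly A z)) (f (poly B z)) \<le> 1" using A B z by (auto intro: integral_abs_le_1)
  show "1 \<le> max (f (poly A z)) (f (poly B z))"
  proof (cases "degree A + degree B = 0")
    case True
    then have "poly A z = lead_coeff A" by (metis add_is_0 degree_0_id poly_const_conv)
    with lead show ?thesis by simp
  next
    case False
    with res show ?thesis using abs_resultant_le_max_abs_poly[OF A B z] by simp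
  qed
qed

end

section \<open>The dynamics\<close>

lemma mult_power_less_max_power:
  fixes P Q :: real
  assumes "0 \<le> P" "0 \<le> Q" "P \<noteq> Q" and d: "2 \<le> d"
  shows "P * Q ^ (d - 1) < max P Q ^ d"
proof -
  obtain e where d: "d = Suc (Suc e)" using d by (metis add_2_eq_Suc le_Suc_ex)
  show ?thesis
  proof (cases "P < Q")
    case True
    then have "P * Q ^ (d - 1) < Q * Q ^ (d - 1)" using assms by (intro mult_strict_right_mono) auto
    then show ?thesis using True by (simp add: d)
  next
    case False
    with assms have "Q < P" by simp
    then have "P * Q ^ (d - 1) < P * P ^ (d - 1)" using assms by (intro mult_strict_left_mono power_strict_mono) (auto simp: d)
    then show ?thesis using \<open>Q < P\<close> by (simp add: d)
  qed
qed

lemma mult_power_le_scaled: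
  fixes L a b :: real
  assumes L: "1 \<le> L" and "0 \<le> a" "0 \<le> b" and d: "2 \<le> d"
  shows "L * (a * b ^ (d - 1)) ^ d \<le> a ^ d * (L * b ^ d) ^ (d - 1)"
proof -
  have "L ^ 1 \<le> L ^ (d - 1)" using L d by (intro power_increasing) auto
  then have "L \<le> L ^ (d - 1)" by simp
  then have "L * (b ^ d) ^ (d - 1) \<le> L ^ (d - 1) * (b ^ d) ^ (d - 1)" using assms by (intro mult_right_mono) auto
  then have "a ^ d * (L * (b ^ d) ^ (d - 1)) \<le> a ^ d * (L ^ (d - 1) * (b ^ d) ^ (d - 1))"
    using assms by (intro mult_left_mono) auto
  moreover have "(b ^ (d - 1)) ^ d = (b ^ d) ^ (d - 1)" by (simp flip: power_mult add: mult.commute)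
  ultimately show ?thesis by (simp add: power_mult_distrib mult.left_commute)
qed

lemma mult_eq_1_if_le_1:
  fixes a b :: real
  assumes "0 \<le> a" "a \<le> 1" "0 \<le> b" "b \<le> 1" "a * b = 1"
  shows "a = 1" "b = 1"
  using mult_left_le[of b a] mult_left_le_one_le[of b a] assms by auto

lemma power_eq_1_if_le_1:
  fixes a :: real
  assumes "0 \<le> a" "a \<le> 1" "a ^ d = 1" "0 < d"
  shows "a = 1"
  using power_less_one_iff[of a d] assms by auto

lemma mult_neq_mult_plus_1:
  assumes "2 \<le> (d::nat)"
  shows "d * i \<noteq> d * j + 1"
proof
  assume "d * i = d * j + 1"
  then have "d dvd 1" by (metis dvd_add_right_iff dvd_triv_left)
  with assms show False by simp
qed

lemma ln_power_power_div:
  fixes m :: real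
  assumes "0 < m" "0 < d" "0 < n"
  shows "ln (m ^ d ^ (n - 1)) / real d ^ n = ln m / real d"
proof -
  have "ln (m ^ d ^ (n - 1)) = real d ^ (n - 1) * ln m" using assms(1) by (simp add: ln_realpow)
  moreover have "real d ^ n = real d ^ (n - 1) * real d" using assms(3) by (cases n) simp_all
  moreover have "0 < real d ^ (n - 1)" using assms(2) by simp
  ultimately show ?thesis by simp
qed

context nonarch_abs
begin

text \<open>The invariant of the dynamics (x, y) \<mapsto> (x^d + c y^d, x y^(d-1)): for |c| > 1 the first
  coordinate dominates, for |c| \<le> 1 the pair is integral and "primitive".\<close>

definition stable :: "nat \<Rightarrow> complex \<Rightarrow> complex \<Rightarrow> complex \<Rightarrow> bool" where
  "stable d c x y \<longleftrightarrow> (if 1 < f c then f c * f y ^ d < f x ^ d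
     else f x \<le> 1 \<and> f y \<le> 1 \<and> max (f x ^ d) (f c * f y ^ d) = 1)"

lemma max_abs_if_stable:
  assumes "stable d c x y" "0 < d" and x: "algebraic x" and y: "algebraic y" and c: "algebraic c"
  shows "max (f x) (f y) = (if 1 < f c then f x else 1)"
proof (cases "1 < f c")
  case True
  moreover have "1 * f y ^ d \<le> f c * f y ^ d"
    using True abs_nonneg[OF y] by (intro mult_right_mono) auto
  ultimately have "f y ^ d < f x ^ d" using assms(1) unfolding stable_def by simp
  then have "f y < f x" using abs_nonneg[OF x] by (rule power_less_imp_less_base)
  then show ?thesis using True by simp
next
  case False
  then have le: "f x \<le> 1" "f y \<le> 1" "max (f x ^ d) (f c * f y ^ d) = 1"
    using assms unfolding stable_def by auto
  have "f c * f y ^ d \<le> f y ^ d"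
    using False abs_nonneg[OF c] abs_nonneg[OF y] by (intro mult_left_le_one_le) auto
  then have "1 \<le> max (f x ^ d) (f y ^ d)" using le(3) max.mono[of "f x ^ d" "f x ^ d"] by fastforce
  moreover have "f x ^ d < 1" if "f x < 1" using that abs_nonneg[OF x] \<open>0 < d\<close> by (simp add: power_less_one_iff)
  moreover have "f y ^ d < 1" if "f y < 1" using that abs_nonneg[OF y] \<open>0 < d\<close> by (simp add: power_less_one_iff)
  ultimately have "\<not> (f x < 1 \<and> f y < 1)" by (auto simp: le_max_iff_disj)
  then show ?thesis using False le by (auto simp: max_def)
qed

lemma max_abs_pos_if_stable:
  assumes "stable d c x y" "0 < d" and x: "algebraic x" and y: "algebraic y" and c: "algebraic c"
  shows "0 < max (f x) (f y)"
proof (cases "1 < f c")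
  case True
  have "0 \<le> f c * f y ^ d" using abs_nonneg[OF c] abs_nonneg[OF y] True by simp
  then have "0 < f x ^ d" using assms(1) True unfolding stable_def by simp
  then have "0 < f x" using abs_nonneg[OF x] \<open>0 < d\<close> by (metis less_le zero_power)
  then show ?thesis by simp
qed (use max_abs_if_stable[OF assms] in simp)

lemma stable_iterate_if_ne:
  assumes d: "2 \<le> d" and c: "algebraic c" "1 < f c" and x: "algebraic x" and y: "algebraic y"
    and ne: "f x ^ d \<noteq> f c * f y ^ d"
  shows "f (x ^ d + c * y ^ d) = max (f x ^ d) (f c * f y ^ d)"
    and "stable d c (x ^ d + c * y ^ d) (x * y ^ (d - 1))"
proof -
  show fx: "f (x ^ d + c * y ^ d) = max (f x ^ d) (f c * f y ^ d)"
    using abs_add_eq_max[of "x ^ d" "c * y ^ d"] c x y ne by (simp add: abs_mult abs_power)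
  have "f c * f (x * y ^ (d - 1)) ^ d = f c * (f x * f y ^ (d - 1)) ^ d"
    using x y by (simp add: abs_mult abs_power)
  also have "\<dots> \<le> f x ^ d * (f c * f y ^ d) ^ (d - 1)"
    using c x y d abs_nonneg by (intro mult_power_le_scaled) auto
  also have "\<dots> < max (f x ^ d) (f c * f y ^ d) ^ d"
    using c x y d ne abs_nonneg by (intro mult_power_less_max_power) auto
  finally show "stable d c (x ^ d + c * y ^ d) (x * y ^ (d - 1))"
    unfolding stable_def fx using c by simp
qed

lemma stable_iterate_if_le_1:
  assumes d: "2 \<le> d" and c: "algebraic c" "f c \<le> 1" and x: "algebraic x" and y: "algebraic y"
    and st: "stable d c x y"
  shows "stable d c (x ^ d + c * y ^ d) (x * y ^ (d - 1))"
proof -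
  let ?x = "x ^ d + c * y ^ d" and ?y = "x * y ^ (d - 1)"
  let ?P = "f x ^ d" and ?Q = "f c * f y ^ d"
  have alg: "algebraic ?x" "algebraic ?y" using c x y by auto
  have st': "f x \<le> 1" "f y \<le> 1" "max ?P ?Q = 1" using st c by (auto simp: stable_def)
  have nonneg: "0 \<le> f x" "0 \<le> f y" "0 \<le> f c" using abs_nonneg c x y by auto
  have "f ?x \<le> max ?P ?Q"
    using abs_add_le_max[of "x ^ d" "c * y ^ d"] c x y by (simp add: abs_mult abs_power)
  then have fx: "f ?x \<le> 1" using st'(3) by simp
  have fy: "f ?y = f x * f y ^ (d - 1)" using x y by (simp add: abs_mult abs_power)
  then have "f ?y \<le> 1" using st' nonneg by (simp add: mult_le_one power_le_one)
  then have Q': "f c * f ?y ^ d \<le> 1" using c nonneg abs_nonneg[OF alg(2)] by (simp add: mult_le_one power_le_one)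
  moreover have "max (f ?x ^ d) (f c * f ?y ^ d) = 1"
  proof (cases "?P = ?Q")
    case False
    then have "f ?x = max ?P ?Q"
      using abs_add_eq_max[of "x ^ d" "c * y ^ d"] c x y by (simp add: abs_mult abs_power)
    with st'(3) Q' show ?thesis by simp
  next
    case True
    with st'(3) have "?P = 1" "?Q = 1" by simp_all
    have "f x = 1" using power_eq_1_if_le_1[of "f x" d] \<open>?P = 1\<close> st'(1) nonneg d by simp
    have "f y ^ d \<le> 1" using nonneg st'(2) by (simp add: power_le_one)
    then have "f c = 1" "f y ^ d = 1"
      using mult_eq_1_if_le_1[of "f c" "f y ^ d"] \<open>?Q = 1\<close> c nonneg by auto
    then have "f y = 1" using power_eq_1_if_le_1[of "f y" d] st'(2) nonneg d by simp
    then have "f c * f ?y ^ d = 1" using fy \<open>f x = 1\<close> \<open>f c = 1\<close> by simp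
    moreover have "f ?x ^ d \<le> 1" using fx abs_nonneg[OF alg(1)] by (rule power_le_one[rotated])
    ultimately show ?thesis by simp
  qed
  ultimately show ?thesis using fx \<open>f ?y \<le> 1\<close> c by (simp add: stable_def)
qed

lemma stable_iterate:
  assumes d: "2 \<le> d" and c: "algebraic c" and x: "algebraic x" and y: "algebraic y"
    and st: "stable d c x y"
  shows "stable d c (x ^ d + c * y ^ d) (x * y ^ (d - 1))"
    and "max (f (x ^ d + c * y ^ d)) (f (x * y ^ (d - 1))) = max (f x) (f y) ^ d"
proof -
  let ?x = "x ^ d + c * y ^ d" and ?y = "x * y ^ (d - 1)"
  have alg: "algebraic ?x" "algebraic ?y" using c x y by auto
  have "stable d c ?x ?y \<and> (1 < f c \<longrightarrow> f ?x = f x ^ d)"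
  proof (cases "1 < f c")
    case True
    then have "f c * f y ^ d < f x ^ d" using st by (simp add: stable_def)
    then show ?thesis using stable_iterate_if_ne[OF d c True x y] by (simp add: max_def)
  qed (use stable_iterate_if_le_1[OF d c _ x y st] in simp)
  then have st_new: "stable d c ?x ?y" and dominant: "1 < f c \<Longrightarrow> f ?x = f x ^ d" by auto
  then show "stable d c ?x ?y" by simp
  have "0 < d" using d by simp
  show "max (f ?x) (f ?y) = max (f x) (f y) ^ d"
    using max_abs_if_stable[OF st_new \<open>0 < d\<close> alg c] max_abs_if_stable[OF st \<open>0 < d\<close> x y c] dominant
    by simp
qed

lemma stable_scale:
  assumes st: "stable d c x y" and x: "algebraic x" and y: "algebraic y" and u: "algebraic u" "u \<noteq> 0"
    and "1 < f c \<or> f u = 1"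
  shows "stable d c (u * x) (u * y)"
proof (cases "1 < f c")
  case True
  have "0 < f u ^ d" using u abs_nonneg[OF u(1)] abs_eq_0_iff[OF u(1)] by simp
  then have "f u ^ d * (f c * f y ^ d) < f u ^ d * f x ^ d"
    using st True by (simp add: stable_def)
  then show ?thesis using True x y u by (simp add: stable_def abs_mult power_mult_distrib mult_ac)
next
  case False
  then show ?thesis using assms by (simp add: stable_def abs_mult)
qed

end

lemma poly_div_X_if_root_0:
  fixes p :: "complex poly"
  assumes "poly p 0 = 0" "z \<noteq> 0"
  shows "poly (p div [:0, 1:]) z = inverse z * poly p z"
proof -
  obtain q where p: "p = [:0, 1:] * q" using assms(1) by (auto simp: poly_eq_0_iff_dvd elim: dvdE)
  have "p div [:0, 1:] = q" unfolding p by (rule nonzero_mult_div_cancel_left) simp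
  with p show ?thesis using assms(2) by simp
qed

lemma poly_AB_seq_Suc:
  assumes "0 < n"
  shows "poly (fst (AB_seq d A B (Suc n))) z =
      poly (fst (AB_seq d A B n)) z ^ d + z * poly (snd (AB_seq d A B n)) z ^ d"
    and "poly (snd (AB_seq d A B (Suc n))) z =
      poly (fst (AB_seq d A B n)) z * poly (snd (AB_seq d A B n)) z ^ (d - 1)"
proof -
  obtain m where n: "n = Suc m" using assms by (metis gr0_implies_Suc)
  show "poly (fst (AB_seq d A B (Suc n))) z =
      poly (fst (AB_seq d A B n)) z ^ d + z * poly (snd (AB_seq d A B n)) z ^ d"
    and "poly (snd (AB_seq d A B (Suc n))) z =
      poly (fst (AB_seq d A B n)) z * poly (snd (AB_seq d A B n)) z ^ (d - 1)"
    unfolding n by (cases "AB_seq d A B (Suc m)"; simp)+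
qed

lemma poly_AB_seq_1:
  fixes A B :: "complex poly"
  assumes "0 < d" "z \<noteq> 0"
  defines "u \<equiv> if poly A 0 = 0 then inverse z else 1"
  shows "poly (fst (AB_seq d A B 1)) z = u * (poly A z ^ d + z * poly B z ^ d)"
    and "poly (snd (AB_seq d A B 1)) z = u * (poly A z * poly B z ^ (d - 1))"
  using assms poly_div_X_if_root_0[of "A ^ d + [:0, 1:] * B ^ d" z]
    poly_div_X_if_root_0[of "A * B ^ (d - 1)" z]
  by (auto simp: u_def zero_power)

context nonarch_abs
begin

lemma max_abs_orbit_eq_power:
  assumes d: "2 \<le> d" and c: "algebraic c"
    and x_Suc: "\<And>n. 0 < n \<Longrightarrow> x (Suc n) = x n ^ d + c * y n ^ d"
    and y_Suc: "\<And>n. 0 < n \<Longrightarrow> y (Suc n) = x n * y n ^ (d - 1)"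
    and start: "algebraic (x 1)" "algebraic (y 1)" "stable d c (x 1) (y 1)"
    and n: "0 < n"
  shows "max (f (x n)) (f (y n)) = max (f (x 1)) (f (y 1)) ^ d ^ (n - 1)"
proof -
  have "algebraic (x n) \<and> algebraic (y n) \<and> stable d c (x n) (y n) \<and>
    max (f (x n)) (f (y n)) = max (f (x 1)) (f (y 1)) ^ d ^ (n - 1)"
    using n
  proof (induct n rule: nat_induct_non_zero)
    case (Suc n)
    then have IH: "algebraic (x n)" "algebraic (y n)" "stable d c (x n) (y n)"
      "max (f (x n)) (f (y n)) = max (f (x 1)) (f (y 1)) ^ d ^ (n - 1)" by simp_all
    have step: "x (Suc n) = x n ^ d + c * y n ^ d" "y (Suc n) = x n * y n ^ (d - 1)"
      using Suc x_Suc y_Suc by simp_all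
    have "d ^ (n - 1) * d = d ^ (Suc n - 1)" using Suc by (metis Suc_pred diff_Suc_1 power_Suc2)
    then have "max (f (x (Suc n))) (f (y (Suc n))) = max (f (x 1)) (f (y 1)) ^ d ^ (Suc n - 1)"
      unfolding step stable_iterate(2)[OF d c IH(1-3)] IH(4) by (simp flip: power_mult)
    moreover have "stable d c (x (Suc n)) (y (Suc n))"
      unfolding step by (rule stable_iterate(1)[OF d c IH(1-3)])
    ultimately show ?case unfolding step using c IH by auto
  qed (use start in simp)
  then show ?thesis by simp
qed

lemma stable_first_iterate_if_large:
  assumes d: "2 \<le> d" and A: "integral_poly A" and B: "integral_poly B"
    and lead_A: "f (lead_coeff A) = 1" and lead_B: "f (lead_coeff B) = 1"
    and z: "algebraic z" "1 < f z"
  shows "stable d z (poly A z ^ d + z * poly B z ^ d) (poly A z * poly B z ^ (d - 1))"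
proof (rule stable_iterate_if_ne(2)[OF d z])
  show "algebraic (poly A z)" "algebraic (poly B z)"
    using algebraic_poly_value A B z(1) by blast+
  have "f (poly A z) ^ d = f z ^ (d * degree A)"
    unfolding abs_poly_eq_power_degree[OF A z lead_A] by (simp add: power_mult[symmetric] mult.commute)
  moreover have "f z * f (poly B z) ^ d = f z ^ (d * degree B + 1)"
    unfolding abs_poly_eq_power_degree[OF B z lead_B] by (simp add: power_mult[symmetric] mult.commute)
  moreover have "d * degree A \<noteq> d * degree B + 1" using d by (rule mult_neq_mult_plus_1)
  ultimately show "f (poly A z) ^ d \<noteq> f z * f (poly B z) ^ d"
    by (simp only: power_inject_exp[OF z(2)] not_False_eq_True)
qed

lemma stable_values_if_unit:
  assumes A: "integral_poly A" and B: "integral_poly B"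
    and res: "f (resultant A B) = 1" and lead_A: "f (lead_coeff A) = 1"
    and coeff_A: "coeff A 0 \<noteq> 0 \<longrightarrow> f (coeff A 0) = 1"
    and z: "integral z" "f z = 1 \<or> poly A 0 \<noteq> 0"
  shows "stable d z (poly A z) (poly B z)"
proof -
  have int: "integral (poly A z)" "integral (poly B z)"
    using integral_poly_value A B z(1) by blast+
  then have le: "f (poly A z) \<le> 1" "f (poly B z) \<le> 1"
    and nonneg: "0 \<le> f (poly A z)" "0 \<le> f (poly B z)"
    by (simp_all add: integral_abs_le_1 abs_nonneg integral_algebraic)
  have "f z \<le> 1" using z(1) by (rule integral_abs_le_1)
  have "f (poly A z) = 1" if "f z < 1"
    using that z coeff_A by (intro abs_poly_eq_1[OF A z(1)]) (auto simp: poly_0_coeff_0)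
  then have cases: "f (poly A z) = 1 \<or> (f z = 1 \<and> f (poly B z) = 1)"
    using max_abs_poly_eq_1_if_resultant_unit[OF A B res lead_A z(1)] \<open>f z \<le> 1\<close>
    by (auto simp: max_def split: if_splits)
  have P: "f (poly A z) ^ d \<le> 1" using le nonneg by (simp add: power_le_one)
  have Q: "f z * f (poly B z) ^ d \<le> 1"
    using le nonneg \<open>f z \<le> 1\<close> by (simp add: mult_le_one power_le_one)
  have "max (f (poly A z) ^ d) (f z * f (poly B z) ^ d) = 1"
    using cases
  proof
    assume "f (poly A z) = 1"
    with Q show ?thesis by simp
  next
    assume "f z = 1 \<and> f (poly B z) = 1"
    with P show ?thesis by simp
  qed
  then show ?thesis using le \<open>f z \<le> 1\<close> by (simp add: stable_def)
qed

lemma stable_first_iterate_if_small: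
  assumes d: "2 \<le> d" and A: "integral_poly A" and B: "integral_poly B"
    and res: "f (resultant A B) = 1" and lead_A: "f (lead_coeff A) = 1"
    and z: "integral z" "z \<noteq> 0" "f z < 1" and A_0: "poly A 0 = 0"
  shows "stable d z (inverse z * (poly A z ^ d + z * poly B z ^ d))
    (inverse z * (poly A z * poly B z ^ (d - 1)))"
proof -
  define a where "a = poly A z"
  define b where "b = poly B z"
  have alg: "algebraic z" "algebraic a" "algebraic b"
    using integral_algebraic algebraic_poly_value A B z(1) unfolding a_def b_def by blast+
  have fz: "0 < f z" using abs_nonneg[OF alg(1)] abs_eq_0_iff[OF alg(1)] z(2) by linarith
  have inv: "algebraic (inverse z)" "f (inverse z) = inverse (f z)"
    using alg(1) by (rule algebraic_inverse, rule abs_inverse)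
  have fa: "f a \<le> f z"
    using abs_poly_le_abs_if_coeff_0_eq_0[OF A z(1)] A_0 unfolding a_def by (simp add: poly_0_coeff_0)
  have "max (f a) (f b) = 1"
    unfolding a_def b_def by (rule max_abs_poly_eq_1_if_resultant_unit[OF A B res lead_A z(1)])
  with fa z(3) have fb: "f b = 1" by (simp add: max_def split: if_splits)
  \<comment> \<open>A(0) = 0 forces |A(z)| \<le> |z|, so the term z B(z)^d dominates\<close>
  have "f (a ^ d) \<le> f z ^ d" using fa abs_nonneg[OF alg(2)] by (simp add: abs_power[OF alg(2)] power_mono)
  also have "\<dots> < f z" using power_strict_decreasing[of 1 d "f z"] d fz z(3) by simp
  also have "\<dots> = f (z * b ^ d)" using fb alg by (simp add: abs_mult abs_power)
  finally have "f (z * b ^ d + a ^ d) = f (z * b ^ d)"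
    by (intro abs_add_eq_left) (use alg in simp_all)
  then have "f (a ^ d + z * b ^ d) = f z" using fb alg by (simp add: abs_mult abs_power add.commute)
  then have fx: "f (inverse z * (a ^ d + z * b ^ d)) = 1"
    using alg fz inv by (simp add: abs_mult)
  have "f (inverse z * (a * b ^ (d - 1))) = inverse (f z) * f a"
    using alg fb inv by (simp add: abs_mult abs_power)
  also have "\<dots> \<le> 1" using fa fz by (simp add: field_simps)
  finally have fy: "f (inverse z * (a * b ^ (d - 1))) \<le> 1" .
  moreover have "0 \<le> f (inverse z * (a * b ^ (d - 1)))" using alg inv by (simp add: abs_nonneg)
  ultimately have "f z * f (inverse z * (a * b ^ (d - 1))) ^ d \<le> 1"
    using z(3) fz by (simp add: mult_le_one power_le_one)
  then show ?thesis unfolding stable_def a_def[symmetric] b_def[symmetric] using z(3) fx fy by simp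
qed

lemma stable_AB_seq_1:
  assumes d: "2 \<le> d" and A: "integral_poly A" and B: "integral_poly B"
    and res: "f (resultant A B) = 1" and lead_A: "f (lead_coeff A) = 1" and lead_B: "f (lead_coeff B) = 1"
    and coeff_A: "coeff A 0 \<noteq> 0 \<longrightarrow> f (coeff A 0) = 1"
    and z: "algebraic z" "z \<noteq> 0"
  shows "algebraic (poly (fst (AB_seq d A B 1)) z)" "algebraic (poly (snd (AB_seq d A B 1)) z)"
    and "stable d z (poly (fst (AB_seq d A B 1)) z) (poly (snd (AB_seq d A B 1)) z)"
proof -
  define u where "u = (if poly A 0 = 0 then inverse z else 1)"
  let ?x = "poly A z ^ d + z * poly B z ^ d" and ?y = "poly A z * poly B z ^ (d - 1)"
  have first: "poly (fst (AB_seq d A B 1)) z = u * ?x" "poly (snd (AB_seq d A B 1)) z = u * ?y"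
    using poly_AB_seq_1[of d z A B] d z unfolding u_def by simp_all
  have alg_AB: "algebraic (poly A z)" "algebraic (poly B z)"
    using algebraic_poly_value A B z(1) by blast+
  have alg: "algebraic ?x" "algebraic ?y" "algebraic u" "u \<noteq> 0"
    using alg_AB z unfolding u_def by (simp_all add: algebraic_inverse)
  then show "algebraic (poly (fst (AB_seq d A B 1)) z)" "algebraic (poly (snd (AB_seq d A B 1)) z)"
    unfolding first by simp_all
  have "1 < f z \<or> (f z \<le> 1 \<and> (f z = 1 \<or> poly A 0 \<noteq> 0)) \<or> (f z < 1 \<and> poly A 0 = 0)"
    by (cases "poly A 0 = 0") auto
  then consider (large) "1 < f z" | (unit) "f z \<le> 1" "f z = 1 \<or> poly A 0 \<noteq> 0"
    | (small) "f z < 1" "poly A 0 = 0"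
    by blast
  then show "stable d z (poly (fst (AB_seq d A B 1)) z) (poly (snd (AB_seq d A B 1)) z)"
    unfolding first
  proof cases
    case large
    show "stable d z (u * ?x) (u * ?y)"
      using large by (intro stable_scale[OF stable_first_iterate_if_large[OF d A B lead_A lead_B z(1) large] alg]) simp
  next
    case unit
    then have "integral z" using z(1) by (simp add: integral_def)
    then have "stable d z (poly A z) (poly B z)"
      by (rule stable_values_if_unit[OF A B res lead_A coeff_A _ unit(2)])
    then have st: "stable d z ?x ?y" by (rule stable_iterate(1)[OF d z(1) alg_AB])
    have "f u = 1" using unit z(1) by (auto simp: u_def abs_inverse)
    then show "stable d z (u * ?x) (u * ?y)" by (intro stable_scale[OF st alg]) simp
  next
    case small
    then have "integral z" using z(1) by (simp add: integral_def)
    then show "stable d z (u * ?x) (u * ?y)"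
      using stable_first_iterate_if_small[OF d A B res lead_A _ z(2) small] small by (simp add: u_def)
  qed
qed

lemma M_cnv_eq_power:
  assumes d: "2 \<le> d" and A: "integral_poly A" and B: "integral_poly B"
    and res: "f (resultant A B) = 1" and lead_A: "f (lead_coeff A) = 1" and lead_B: "f (lead_coeff B) = 1"
    and coeff_A: "coeff A 0 \<noteq> 0 \<longrightarrow> f (coeff A 0) = 1"
    and z: "algebraic z" "z \<noteq> 0" and n: "0 < n"
  shows "M_cnv d A B n f z = M_cnv d A B 1 f z ^ d ^ (n - 1)" and "0 < M_cnv d A B 1 f z"
proof -
  define x where "x k = poly (fst (AB_seq d A B k)) z" for k
  define y where "y k = poly (snd (AB_seq d A B k)) z" for k
  have start: "algebraic (x 1)" "algebraic (y 1)" "stable d z (x 1) (y 1)"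
    using stable_AB_seq_1[OF assms(1-9)] unfolding x_def y_def by auto
  have M: "M_cnv d A B k f z = max (f (x k)) (f (y k))" for k
    unfolding M_cnv_def x_def y_def ..
  show "M_cnv d A B n f z = M_cnv d A B 1 f z ^ d ^ (n - 1)"
    unfolding M using d z n start poly_AB_seq_Suc
    by (intro max_abs_orbit_eq_power) (auto simp: x_def y_def)
  show "0 < M_cnv d A B 1 f z"
    unfolding M using max_abs_pos_if_stable[OF start(3)] start d z by simp
qed

end

theorem proposition4p3:
  fixes d p :: nat and K :: "complex set" and A B :: "complex poly"
    and f :: "complex \<Rightarrow> real" and lam :: complex
  assumes "d \<ge> 2"
    and "number_field K"
    and "A \<noteq> 0" and "B \<noteq> 0"
    and "\<forall>i. coeff A i \<in> K" and "\<forall>i. coeff B i \<in> K"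
    and "coprime A B"
    and "prime p" and "padic_abs_ext p f"
    and "\<forall>i. v_integer f (coeff A i)" and "\<forall>i. v_integer f (coeff B i)"
    and "v_unit f (resultant A B)"
    and "v_unit f (lead_coeff A)" and "v_unit f (lead_coeff B)"
    and "coeff A 0 \<noteq> 0 \<longrightarrow> v_unit f (coeff A 0)"
    and "algebraic lam" and "lam \<noteq> 0"
  shows "\<forall>n\<ge>1. ln (M_cnv d A B n f lam) / real d ^ n = ln (M_cnv d A B 1 f lam) / real d"
proof (intro allI impI)
  fix n :: nat
  assume "1 \<le> n"
  interpret nonarch_abs f using assms(9) by (rule nonarch_abs_if_padic_abs_ext)
  have integral: "integral_poly A" "integral_poly B"
    using assms(2,5,6,10,11) number_field_algebraic
    unfolding integral_poly_def integral_def v_integer_def by blast+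
  have units: "f (resultant A B) = 1" "f (lead_coeff A) = 1" "f (lead_coeff B) = 1"
    "coeff A 0 \<noteq> 0 \<longrightarrow> f (coeff A 0) = 1"
    using assms(12-15) unfolding v_unit_def by auto
  have "0 < n" using \<open>1 \<le> n\<close> by simp
  note M = M_cnv_eq_power[OF assms(1) integral units assms(16,17) this]
  show "ln (M_cnv d A B n f lam) / real d ^ n = ln (M_cnv d A B 1 f lam) / real d"
    unfolding M(1) using M(2) \<open>0 < n\<close> assms(1) by (intro ln_power_power_div) auto
qed

end
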